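(* Let $c>0$ be a constant and let $\mathcal{F}$ be a finite nice family of sets in the plane such that every subfamily $\mathcal{F}'\subseteq\mathcal{F}$ has union complexity at most $c|\mathcal{F}'|$. Then the intersection graph of $\mathcal{F}$ has at most \[ \Big(\big(\tfrac{ce}{2}+1\big)\omega(\mathcal{F})-1\Big)|\mathcal{F}| \] edges, where $e$ is the base of the natural logarithm.
   Context: A family $\mathcal{F}$ of sets in the plane is called nice if every member of $\mathcal{F}$ is a region bounded by a simple closed Jordan curve and these boundary curves are in general position: any two of them cross in only finitely many points (two curves $\alpha,\beta$ cross at a point if $\alpha$ passes from one side of $\beta$ to the other there), no two curves touch or overlap, and no three curves pass through a common point. The union complexity of a family is the number of intersection points of boundaries of two (or more) members of the family that lie on the boundary of the union of all members of the family. The intersection graph of $\mathcal{F}$ has vertex set $\mathcal{F}$, two members being adjacent iff they intersect. $\omega(\mathcal{F})$ denotes the clique number of this intersection graph (the maximum number of pairwise intersecting members). *)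

theory Defs
  imports "HOL-Analysis.Analysis"
begin

text \<open>The plane is modelled as the complex plane. A Jordan region is a closed region bounded by
a simple closed curve: the curve together with its inside.\<close>

definition jordan_region :: "complex set \<Rightarrow> bool" where
  "jordan_region S \<longleftrightarrow> (\<exists>g. simple_path g \<and> pathfinish g = pathstart g \<and>
      S = path_image g \<union> inside (path_image g))"

text \<open>The curve A crosses the curve B at p: running along a (periodically extended) simple closed
parametrisation g of A through p, just before p the curve lies on one side of B and just after p on
the other side.\<close>

definition curve_crosses_at :: "complex set \<Rightarrow> complex set \<Rightarrow> complex \<Rightarrow> bool" where
  "curve_crosses_at A B p \<longleftrightarrow>
     (\<exists>g t. simple_path g \<and> pathfinish g = pathstart g \<and> path_image g = A \<and>
        t \<in> {0..<1} \<and> g t = p \<and>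
        (\<exists>\<delta>>0.
           ((\<forall>s. t - \<delta> < s \<and> s < t \<longrightarrow> g (frac s) \<in> inside B) \<and>
            (\<forall>s. t < s \<and> s < t + \<delta> \<longrightarrow> g (frac s) \<in> outside B)) \<or>
           ((\<forall>s. t - \<delta> < s \<and> s < t \<longrightarrow> g (frac s) \<in> outside B) \<and>
            (\<forall>s. t < s \<and> s < t + \<delta> \<longrightarrow> g (frac s) \<in> inside B))))"

definition nice_family :: "complex set set \<Rightarrow> bool" where
  "nice_family F \<longleftrightarrow>
     (\<forall>S\<in>F. jordan_region S) \<and>
     (\<forall>S\<in>F. \<forall>T\<in>F. S \<noteq> T \<longrightarrow>
        finite (frontier S \<inter> frontier T) \<and>
        (\<forall>p \<in> frontier S \<inter> frontier T. curve_crosses_at (frontier S) (frontier T) p)) \<and>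
     (\<forall>S\<in>F. \<forall>T\<in>F. \<forall>U\<in>F. S \<noteq> T \<and> S \<noteq> U \<and> T \<noteq> U \<longrightarrow>
        frontier S \<inter> frontier T \<inter> frontier U = {})"

definition union_complexity :: "complex set set \<Rightarrow> nat" where
  "union_complexity F = card {p. (\<exists>S\<in>F. \<exists>T\<in>F. S \<noteq> T \<and> p \<in> frontier S \<and> p \<in> frontier T)
                               \<and> p \<in> frontier (\<Union>F)}"

definition intersection_edges :: "'a set set \<Rightarrow> 'a set set set" where
  "intersection_edges F = {{S, T} | S T. S \<in> F \<and> T \<in> F \<and> S \<noteq> T \<and> S \<inter> T \<noteq> {}}"

definition clique_number :: "'a set set \<Rightarrow> nat" where
  "clique_number F = Max {card K | K. K \<subseteq> F \<and> (\<forall>S\<in>K. \<forall>T\<in>K. S \<inter> T \<noteq> {})}"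

end

theory Submission
  imports Defs
begin

text \<open>Two intersecting regions of a nice family either have crossing boundaries or, by the Jordan
curve theorem, are nested. A region together with all regions containing it is a clique, so there
are at most \<open>(\<omega> - 1) n\<close> nested pairs. A closed curve that crosses another one must cross it again,
so crossing boundaries meet in at least two points, and as no three boundaries pass through a
point these intersections are disjoint: there are at most \<open>|V| / 2\<close> crossing pairs, \<open>V\<close> being
the set of vertices of the arrangement. Finally \<open>|V|\<close> is bounded by the Clarkson-Shor technique:
a vertex is charged to two regions crossing there, and it lies on the boundary of the union of any
subfamily containing both of them but none of the at most \<open>\<omega> - 2\<close> other regions through it.
Sampling every region independently with probability \<open>q = 1 / (\<omega> - 1)\<close> and comparing with the
union complexity gives \<open>|V| q\<^sup>2 (1 - q)\<^bsup>\<omega> - 2\<^esup> \<le> c q n\<close>, hence \<open>|V| \<le> c e (\<omega> - 1) n\<close>.\<close>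

section \<open>Jordan regions\<close>

lemma jordan_region_boundary_loop:
  assumes "jordan_region S"
  obtains g where "simple_path g" "pathfinish g = pathstart g"
    "frontier S = path_image g" "S = - outside (path_image g)"
proof -
  obtain g where g: "simple_path g" "pathfinish g = pathstart g"
    "S = path_image g \<union> inside (path_image g)"
    using assms unfolding jordan_region_def by blast
  have S: "S = - outside (path_image g)"
    using g(3) by (simp add: union_with_inside)
  moreover have "frontier S = path_image g"
    using S Jordan_inside_outside[OF g(1,2)] by (simp add: frontier_complement)
  ultimately show thesis using g that by blast
qed

lemma jordan_region_eq_Compl_outside:
  "jordan_region S \<Longrightarrow> S = - outside (frontier S)"
  by (metis jordan_region_boundary_loop)

lemma closed_jordan_region: "jordan_region S \<Longrightarrow> closed S"
  by (metis jordan_region_boundary_loop Jordan_inside_outside closed_Compl)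

lemma bounded_jordan_region: "jordan_region S \<Longrightarrow> bounded S"
  by (metis jordan_region_def bounded_Un bounded_simple_path_image Jordan_inside_outside)

lemma frontier_jordan_region_subset: "jordan_region S \<Longrightarrow> frontier S \<subseteq> S"
  by (simp add: closed_jordan_region frontier_subset_closed)

lemma jordan_region_nonempty: "jordan_region S \<Longrightarrow> S \<noteq> {}"
  by (metis jordan_region_boundary_loop path_image_nonempty frontier_jordan_region_subset subset_empty)

lemma connected_jordan_region: "jordan_region S \<Longrightarrow> connected S"
  by (metis jordan_region_def Jordan_inside_outside connected_imp_connected_closure
      closure_Un_frontier sup_commute)

lemma connected_frontier_jordan_region: "jordan_region S \<Longrightarrow> connected (frontier S)"
  by (metis jordan_region_boundary_loop connected_simple_path_image)

lemma outside_frontier_jordan_region: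
  assumes "jordan_region S"
  shows "connected (outside (frontier S))" "\<not> bounded (outside (frontier S))"
  using Jordan_inside_outside by (metis jordan_region_boundary_loop assms)+

lemma connected_subset_outside:
  assumes "connected C" "C \<inter> B = {}" "C \<inter> outside B \<noteq> {}"
  shows "C \<subseteq> outside B"
  using assms inside_outside_intersect_connected[OF assms(1)] inside_Un_outside by blast

lemma jordan_region_subset_if_frontier_subset:
  assumes "jordan_region S" "jordan_region T" "frontier S \<subseteq> T" "frontier S \<inter> frontier T = {}"
  shows "S \<subseteq> T"
proof -
  have "outside (frontier T) \<inter> outside (frontier S) \<noteq> {}"
    using bounded_jordan_region[OF assms(1)] outside_frontier_jordan_region(2)[OF assms(2)]
      jordan_region_eq_Compl_outside[OF assms(1)] bounded_subset by blast
  moreover have "outside (frontier T) \<inter> frontier S = {}"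
    using assms(3) jordan_region_eq_Compl_outside[OF assms(2)] by blast
  ultimately have "outside (frontier T) \<subseteq> outside (frontier S)"
    using connected_subset_outside outside_frontier_jordan_region(1)[OF assms(2)] by blast
  then show ?thesis
    using jordan_region_eq_Compl_outside assms(1,2) by blast
qed

text \<open>If neither region contains the other, each boundary lies in the exterior of the other
region, and then the connected region T, meeting the exterior of S, lies in it.\<close>

lemma jordan_regions_nested:
  assumes "jordan_region S" "jordan_region T" "S \<inter> T \<noteq> {}" "frontier S \<inter> frontier T = {}"
  shows "S \<subseteq> T \<or> T \<subseteq> S"
proof (rule ccontr)
  assume not_nested: "\<not> (S \<subseteq> T \<or> T \<subseteq> S)"
  have "frontier U \<subseteq> outside (frontier V)"
    if "jordan_region U" "jordan_region V" "frontier U \<inter> frontier V = {}" "\<not> U \<subseteq> V" for U V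
  proof (cases "frontier U \<inter> outside (frontier V) = {}")
    case True
    then show ?thesis
      using that jordan_region_subset_if_frontier_subset jordan_region_eq_Compl_outside by blast
  qed (use connected_subset_outside connected_frontier_jordan_region that in blast)
  then have "frontier S \<subseteq> outside (frontier T)" "frontier T \<subseteq> outside (frontier S)"
    using assms not_nested by (metis inf_commute)+
  moreover have "frontier T \<noteq> {}"
    by (metis assms(2) jordan_region_boundary_loop path_image_nonempty)
  ultimately have "T \<subseteq> outside (frontier S)"
    using connected_subset_outside[OF connected_jordan_region[OF assms(2)]]
      jordan_region_eq_Compl_outside[OF assms(2)] frontier_jordan_region_subset[OF assms(2)]
    by blast
  then show False
    using assms(3) jordan_region_eq_Compl_outside[OF assms(1)] by blast
qed

lemma connected_simple_loop_image_Diff: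
  assumes "simple_path g" "pathfinish g = pathstart g"
  shows "connected (path_image g - {p})"
proof (cases "p \<in> path_image g")
  case True
  then obtain a where a: "a \<in> {0..1}" "g a = p"
    by (auto simp: path_image_def)
  define h where "h = shiftpath a g"
  have h: "simple_path h" "path_image h = path_image g" "h 0 = p" "h 1 = p"
    using a assms simple_path_shiftpath[OF assms] path_image_shiftpath[OF a(1) assms(2)]
      pathstart_shiftpath[of a g] pathfinish_shiftpath[OF _ assms(2), of a]
    by (simp_all add: h_def pathstart_def pathfinish_def)
  have ends: "s = 0 \<or> s = 1" if "s \<in> {0..1}" "h s = p" for s
    using h(1,3) that unfolding simple_path_def loop_free_def by fastforce
  have "path_image h - {p} = h ` {0<..<1}"
  proof (intro equalityI subsetI)
    fix x assume "x \<in> path_image h - {p}"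
    then obtain s where "s \<in> {0..1}" "x = h s" "x \<noteq> p"
      unfolding path_image_def by blast
    with h(3,4) show "x \<in> h ` {0<..<1}"
      by (metis atLeastAtMost_iff greaterThanLessThan_iff image_eqI order_less_le)
  next
    fix x assume "x \<in> h ` {0<..<1}"
    then obtain s where "s \<in> {0<..<1}" "x = h s" by blast
    moreover have "h s \<noteq> p"
      using ends[of s] \<open>s \<in> {0<..<1}\<close> by auto
    ultimately show "x \<in> path_image h - {p}"
      unfolding path_image_def by auto
  qed
  moreover have "continuous_on {0<..<1} h"
    using simple_path_imp_path[OF h(1)] unfolding path_def by (rule continuous_on_subset) auto
  ultimately show ?thesis
    using h(2) connected_continuous_image[OF _ connected_Ioo] by metis
next
  case False
  then show ?thesis
    using assms(1) connected_simple_path_image by (simp add: Diff_triv disjoint_iff)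
qed

section \<open>Crossing boundaries\<close>

lemma closed_path_frac_side_closure:
  fixes g :: "real \<Rightarrow> 'a::metric_space"
  assumes "path g" "pathfinish g = pathstart g" "t \<in> {0..<1}" "\<delta> > 0"
    and "(\<forall>s. t < s \<and> s < t + \<delta> \<longrightarrow> g (frac s) \<in> X) \<or>
         (\<forall>s. t - \<delta> < s \<and> s < t \<longrightarrow> g (frac s) \<in> X)"
  shows "g t \<in> closure (path_image g \<inter> X)"
  unfolding closure_approachable
proof (intro allI impI)
  fix e :: real assume "e > 0"
  have cont: "continuous_on {0..1} g"
    using assms(1) by (simp add: path_def)
  obtain d1 where d1: "d1 > 0" "\<And>s. s \<in> {0..1} \<Longrightarrow> dist s t < d1 \<Longrightarrow> dist (g s) (g t) < e"
    using cont \<open>e > 0\<close> assms(3) unfolding continuous_on_iff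
    by (metis atLeastAtMost_iff atLeastLessThan_iff less_eq_real_def)
  obtain d2 where d2: "d2 > 0" "\<And>s. s \<in> {0..1} \<Longrightarrow> dist s 1 < d2 \<Longrightarrow> dist (g s) (g 1) < e"
    using cont \<open>e > 0\<close> unfolding continuous_on_iff by (metis atLeastAtMost_iff order_refl zero_le_one)
  have "g 1 = g t" if "t = 0"
    using assms(2) that by (simp add: pathstart_def pathfinish_def)
  have "\<exists>s. g (frac s) \<in> X \<and> dist (g (frac s)) (g t) < e"
  proof -
    consider "\<forall>s. t < s \<and> s < t + \<delta> \<longrightarrow> g (frac s) \<in> X"
      | "\<forall>s. t - \<delta> < s \<and> s < t \<longrightarrow> g (frac s) \<in> X" "t > 0"
      | "\<forall>s. t - \<delta> < s \<and> s < t \<longrightarrow> g (frac s) \<in> X" "t = 0"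
      using assms(3,5) by force
    then show ?thesis
    proof cases
      case 1
      define k where "k = min (min d1 \<delta>) (1 - t) / 2"
      have "0 < k" "k < d1" "k < \<delta>" "t + k < 1"
        using d1 assms(3,4) by (auto simp: k_def min_def field_simps)
      moreover have "g (frac (t + k)) \<in> X"
        using 1 \<open>0 < k\<close> \<open>k < \<delta>\<close> by auto
      ultimately show ?thesis
        using assms(3) d1(2)[of "t + k"] frac_eq[of "t + k"]
        by (intro exI[of _ "t + k"]) (auto simp: dist_real_def)
    next
      case 2
      define k where "k = min (min d1 \<delta>) t / 2"
      have "0 < k" "k < d1" "k < \<delta>" "k < t"
        using d1 assms(4) 2 by (auto simp: k_def)
      moreover have "g (frac (t - k)) \<in> X"
        using 2 \<open>0 < k\<close> \<open>k < \<delta>\<close> by auto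
      ultimately show ?thesis
        using assms(3) d1(2)[of "t - k"] frac_eq[of "t - k"]
        by (intro exI[of _ "t - k"]) (auto simp: dist_real_def)
    next
      case 3
      \<comment> \<open>approaching \<open>t = 0\<close> from the left means approaching the end of the loop\<close>
      define k where "k = min (min d2 \<delta>) 1 / 2"
      have k: "0 < k" "k < d2" "k < \<delta>" "k < 1"
        using d2 assms(4) by (auto simp: k_def)
      then have "\<lfloor>- k\<rfloor> = -1"
        by (simp add: floor_eq_iff)
      then have "frac (- k) = 1 - k"
        by (simp add: frac_def)
      moreover have "g (frac (- k)) \<in> X"
        using 3 k by auto
      ultimately show ?thesis
        using 3 k d2(2)[of "1 - k"] \<open>t = 0 \<Longrightarrow> g 1 = g t\<close>
        by (intro exI[of _ "- k"]) (auto simp: dist_real_def)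
    qed
  qed
  moreover have "g (frac s) \<in> path_image g" for s
    unfolding path_image_def by (simp add: frac_lt_1 less_imp_le)
  ultimately show "\<exists>y \<in> path_image g \<inter> X. dist y (g t) < e"
    by blast
qed

lemma crossing_in_closure_sides:
  assumes "curve_crosses_at A B p"
  shows "p \<in> closure (A \<inter> inside B)" "p \<in> closure (A \<inter> outside B)"
proof -
  obtain g t \<delta> where g: "simple_path g" "pathfinish g = pathstart g" "path_image g = A"
    "t \<in> {0..<1}" "g t = p" "\<delta> > 0" and sides:
    "((\<forall>s. t - \<delta> < s \<and> s < t \<longrightarrow> g (frac s) \<in> inside B) \<and>
      (\<forall>s. t < s \<and> s < t + \<delta> \<longrightarrow> g (frac s) \<in> outside B)) \<or>
     ((\<forall>s. t - \<delta> < s \<and> s < t \<longrightarrow> g (frac s) \<in> outside B) \<and>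
      (\<forall>s. t < s \<and> s < t + \<delta> \<longrightarrow> g (frac s) \<in> inside B))"
    using assms unfolding curve_crosses_at_def by blast
  note side_closure = closed_path_frac_side_closure[OF simple_path_imp_path[OF g(1)] g(2,4,6)]
  show "p \<in> closure (A \<inter> inside B)" "p \<in> closure (A \<inter> outside B)"
    using side_closure[of "inside B"] side_closure[of "outside B"] sides g(3,5) by blast+
qed

lemma crossing_not_isolated:
  assumes "jordan_region S" "curve_crosses_at (frontier S) B p" "p \<in> B"
  shows "\<exists>q. q \<noteq> p \<and> q \<in> frontier S \<inter> B"
proof -
  obtain g where g: "simple_path g" "pathfinish g = pathstart g" "frontier S = path_image g"
    using jordan_region_boundary_loop[OF assms(1)] by metis
  have C: "connected (frontier S - {p})"
    using connected_simple_loop_image_Diff[OF g(1,2)] g(3) by simp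
  have "p \<notin> inside B" "p \<notin> outside B"
    using assms(3) inside_no_overlap outside_no_overlap by blast+
  moreover have "frontier S \<inter> inside B \<noteq> {}" "frontier S \<inter> outside B \<noteq> {}"
    using crossing_in_closure_sides[OF assms(2)] by force+
  ultimately have "inside B \<inter> (frontier S - {p}) \<noteq> {}" "outside B \<inter> (frontier S - {p}) \<noteq> {}"
    by blast+
  then have "B \<inter> (frontier S - {p}) \<noteq> {}"
    using inside_outside_intersect_connected[OF C] by blast
  then show ?thesis
    by blast
qed

lemma outside_frontier_jordan_region_eq:
  "jordan_region S \<Longrightarrow> outside (frontier S) = - S"
  by (metis double_compl jordan_region_eq_Compl_outside)

lemma crossing_in_closure_exterior:
  assumes "jordan_region S" "jordan_region T" "curve_crosses_at (frontier S) (frontier T) p"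
  shows "p \<in> closure (- (S \<union> T))"
proof -
  have "frontier S \<subseteq> closure (- S)"
    by (simp add: frontier_closures)
  then have "frontier S \<inter> outside (frontier T) \<subseteq> - T \<inter> closure (- S)"
    using outside_frontier_jordan_region_eq[OF assms(2)] by blast
  also have "\<dots> \<subseteq> closure (- T \<inter> - S)"
    using closed_jordan_region[OF assms(2)] by (intro open_Int_closure_subset) (simp add: open_Compl)
  finally have "closure (frontier S \<inter> outside (frontier T)) \<subseteq> closure (- (S \<union> T))"
    by (simp add: closure_minimal Int_commute)
  then show ?thesis
    using crossing_in_closure_sides(2)[OF assms(3)] by blast
qed

lemma crossing_in_frontier_Union:
  assumes "finite R" "\<And>U. U \<in> R \<Longrightarrow> jordan_region U" "S \<in> R" "T \<in> R"
    and "curve_crosses_at (frontier S) (frontier T) p" "p \<in> frontier S"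
    and "\<And>U. U \<in> R \<Longrightarrow> p \<in> U \<Longrightarrow> U = S \<or> U = T"
  shows "p \<in> frontier (\<Union>R)"
proof -
  define K where "K = \<Union>(R - {S, T})"
  have "closed K"
    unfolding K_def using assms(1,2) closed_jordan_region by (intro closed_Union) auto
  have "p \<notin> K"
    using assms(7) by (auto simp: K_def)
  then have "p \<in> - K \<inter> closure (- (S \<union> T))"
    using crossing_in_closure_exterior[OF assms(2)[OF assms(3)] assms(2)[OF assms(4)] assms(5)]
    by simp
  also have "\<dots> \<subseteq> closure (- K \<inter> - (S \<union> T))"
    using \<open>closed K\<close> by (intro open_Int_closure_subset) (simp add: open_Compl)
  also have "- K \<inter> - (S \<union> T) = - \<Union>R"
    using assms(3,4) by (auto simp: K_def)
  finally have "p \<in> closure (- \<Union>R)" .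
  moreover have "p \<in> closure (\<Union>R)"
    using assms(3,6) frontier_jordan_region_subset[OF assms(2)[OF assms(3)]]
    by (meson UnionI closure_subset subsetD)
  ultimately show ?thesis
    by (simp add: frontier_closures)
qed

section \<open>Random sampling\<close>

definition sample_weight :: "real \<Rightarrow> 'a set \<Rightarrow> 'a set \<Rightarrow> real" where
  "sample_weight q F R = q ^ card R * (1 - q) ^ card (F - R)"

lemma sample_weight_nonneg: "0 \<le> q \<Longrightarrow> q \<le> 1 \<Longrightarrow> 0 \<le> sample_weight q F R"
  by (simp add: sample_weight_def)

lemma sum_sample_weight_contains_avoids:
  assumes "finite F" "A \<subseteq> F" "B \<subseteq> F" "A \<inter> B = {}"
  shows "(\<Sum>R\<in>Pow F. sample_weight q F R * of_bool (A \<subseteq> R \<and> B \<inter> R = {}))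
           = q ^ card A * (1 - q) ^ card B"
proof -
  define f where "f x = (if x \<in> B then 0 else q)" for x
  define g where "g x = (if x \<in> A then 0 else 1 - q)" for x
  have f: "(\<Prod>x\<in>R. f x) = q ^ card R * of_bool (B \<inter> R = {})" if "finite R" for R
  proof (cases "B \<inter> R = {}")
    case True
    then have "(\<Prod>x\<in>R. f x) = (\<Prod>x\<in>R. q)"
      by (intro prod.cong) (auto simp: f_def)
    with True show ?thesis by simp
  qed (use that in \<open>auto simp: f_def intro!: prod_zero\<close>)
  have g: "(\<Prod>x\<in>F - R. g x) = (1 - q) ^ card (F - R) * of_bool (A \<subseteq> R)" for R
  proof (cases "A \<subseteq> R")
    case True
    then have "(\<Prod>x\<in>F - R. g x) = (\<Prod>x\<in>F - R. 1 - q)"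
      by (intro prod.cong) (auto simp: g_def)
    with True show ?thesis by simp
  qed (use assms(1,2) in \<open>auto simp: g_def intro!: prod_zero\<close>)
  have "(\<Sum>R\<in>Pow F. sample_weight q F R * of_bool (A \<subseteq> R \<and> B \<inter> R = {}))
          = (\<Sum>R\<in>Pow F. (\<Prod>x\<in>R. f x) * (\<Prod>x\<in>F - R. g x))"
    using assms(1) by (intro sum.cong refl) (auto simp: f g sample_weight_def finite_subset)
  also have "\<dots> = (\<Prod>x\<in>F. f x + g x)"
    by (rule prod_add[OF assms(1), symmetric])
  also have "\<dots> = (\<Prod>x\<in>F - A - B. f x + g x) * (\<Prod>x\<in>B. f x + g x) * (\<Prod>x\<in>A. f x + g x)"
  proof -
    have "B \<subseteq> F - A" "finite (F - A)"
      using assms by auto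
    then show ?thesis
      using prod.subset_diff[OF assms(2,1), of "\<lambda>x. f x + g x"]
        prod.subset_diff[of B "F - A" "\<lambda>x. f x + g x"] by simp
  qed
  also have "(\<Prod>x\<in>F - A - B. f x + g x) = (\<Prod>x\<in>F - A - B. 1)"
    by (intro prod.cong) (auto simp: f_def g_def)
  also have "(\<Prod>x\<in>B. f x + g x) = (\<Prod>x\<in>B. 1 - q)"
    using assms(4) by (intro prod.cong) (auto simp: f_def g_def)
  also have "(\<Prod>x\<in>A. f x + g x) = (\<Prod>x\<in>A. q)"
    using assms(4) by (intro prod.cong) (auto simp: f_def g_def)
  finally show ?thesis
    by simp
qed

lemma sum_sample_weight_card:
  assumes "finite F"
  shows "(\<Sum>R\<in>Pow F. sample_weight q F R * real (card R)) = q * real (card F)"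
proof -
  have "real (card R) = (\<Sum>x\<in>F. of_bool ({x} \<subseteq> R \<and> {} \<inter> R = {}))" if "R \<subseteq> F" for R
    using that assms by (simp add: Int_absorb1)
  then have "(\<Sum>R\<in>Pow F. sample_weight q F R * real (card R))
      = (\<Sum>x\<in>F. \<Sum>R\<in>Pow F. sample_weight q F R * of_bool ({x} \<subseteq> R \<and> {} \<inter> R = {}))"
    by (simp add: sum_distrib_left sum.swap[of _ F])
  also have "\<dots> = (\<Sum>x\<in>F. q)"
    using assms sum_sample_weight_contains_avoids[OF assms, of "{_}" "{}"] by simp
  finally show ?thesis
    by simp
qed

lemma clarkson_shor_bound:
  fixes A D :: "'b \<Rightarrow> 'a set"
  assumes "finite F" "finite V" "0 \<le> q" "q \<le> 1"
    and "\<And>p. p \<in> V \<Longrightarrow> A p \<subseteq> F" "\<And>p. p \<in> V \<Longrightarrow> D p \<subseteq> F" "\<And>p. p \<in> V \<Longrightarrow> A p \<inter> D p = {}"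
    and "\<And>p. p \<in> V \<Longrightarrow> card (A p) = d" "\<And>p. p \<in> V \<Longrightarrow> card (D p) \<le> k"
    and "\<And>R. R \<subseteq> F \<Longrightarrow> real (card {p \<in> V. A p \<subseteq> R \<and> D p \<inter> R = {}}) \<le> c * real (card R)"
  shows "real (card V) * (q ^ d * (1 - q) ^ k) \<le> c * q * real (card F)"
proof -
  let ?w = "sample_weight q F"
  have "real (card V) * (q ^ d * (1 - q) ^ k) = (\<Sum>p\<in>V. q ^ d * (1 - q) ^ k)"
    by simp
  also have "\<dots> \<le> (\<Sum>p\<in>V. q ^ card (A p) * (1 - q) ^ card (D p))"
    by (rule sum_mono) (use assms(3,4,8,9) in \<open>auto intro!: mult_left_mono power_decreasing\<close>)
  also have "\<dots> = (\<Sum>p\<in>V. \<Sum>R\<in>Pow F. ?w R * of_bool (A p \<subseteq> R \<and> D p \<inter> R = {}))"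
    using sum_sample_weight_contains_avoids[OF assms(1,5,6,7)] by simp
  also have "\<dots> = (\<Sum>R\<in>Pow F. \<Sum>p\<in>V. ?w R * of_bool (A p \<subseteq> R \<and> D p \<inter> R = {}))"
    by (rule sum.swap)
  also have "\<dots> = (\<Sum>R\<in>Pow F. ?w R * real (card {p \<in> V. A p \<subseteq> R \<and> D p \<inter> R = {}}))"
    using assms(2) by (simp add: sum_distrib_left[symmetric] sum_of_bool_eq Int_def)
  also have "\<dots> \<le> (\<Sum>R\<in>Pow F. ?w R * (c * real (card R)))"
    using assms(10) sample_weight_nonneg[OF assms(3,4)] by (intro sum_mono mult_left_mono) auto
  also have "\<dots> = c * q * real (card F)"
    using sum_sample_weight_card[OF assms(1), of q]
    by (simp add: sum_distrib_left[symmetric] mult.left_commute mult.assoc)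
  finally show ?thesis .
qed

lemma exp_minus_one_le_power:
  fixes m :: nat
  assumes "m \<ge> 1"
  shows "exp (-1) \<le> (1 - 1 / real m) ^ (m - 1)"
proof (cases "m = 1")
  case False
  define k where "k = m - 1"
  have k: "k \<ge> 1" "real m = real k + 1"
    using False assms k_def by auto
  have "exp (- (1 / real k)) \<le> 1 / (1 + 1 / real k)"
    using exp_ge_add_one_self[of "1 / real k"] k by (simp add: exp_minus divide_simps mult.commute)
  also have "\<dots> = 1 - 1 / real m"
    using k by (simp add: field_simps)
  finally have "exp (- (1 / real k)) ^ k \<le> (1 - 1 / real m) ^ k"
    by (rule power_mono) simp
  moreover have "exp (-1) = exp (- (1 / real k)) ^ k"
    using k exp_of_nat_mult[of k "- (1 / real k)"] by simp
  ultimately show ?thesis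
    by (simp add: k_def)
qed simp

section \<open>Counting intersecting pairs in a nice family\<close>

lemma nice_family_jordan_region: "nice_family F \<Longrightarrow> S \<in> F \<Longrightarrow> jordan_region S"
  by (simp add: nice_family_def)

lemma nice_family_finite_frontier_Int:
  "nice_family F \<Longrightarrow> S \<in> F \<Longrightarrow> T \<in> F \<Longrightarrow> S \<noteq> T \<Longrightarrow> finite (frontier S \<inter> frontier T)"
  by (simp add: nice_family_def)

lemma nice_family_crosses:
  assumes "nice_family F" "S \<in> F" "T \<in> F" "S \<noteq> T" "p \<in> frontier S" "p \<in> frontier T"
  shows "curve_crosses_at (frontier S) (frontier T) p"
proof -
  have "\<forall>p \<in> frontier S \<inter> frontier T. curve_crosses_at (frontier S) (frontier T) p"
    using assms(1-4) by (simp add: nice_family_def)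
  with assms(5,6) show ?thesis
    by blast
qed

lemma nice_family_no_triple_point:
  assumes "nice_family F" "S \<in> F" "T \<in> F" "U \<in> F" "S \<noteq> T" "S \<noteq> U" "T \<noteq> U"
    and "p \<in> frontier S" "p \<in> frontier T"
  shows "p \<notin> frontier U"
proof -
  have "frontier S \<inter> frontier T \<inter> frontier U = {}"
    using assms(1-7) by (simp add: nice_family_def)
  with assms(8,9) show ?thesis
    by blast
qed

lemma card_le_clique_number:
  assumes "finite F" "K \<subseteq> F" "\<forall>S\<in>K. \<forall>T\<in>K. S \<inter> T \<noteq> {}"
  shows "card K \<le> clique_number F"
  unfolding clique_number_def
proof (rule Max_ge)
  have "{card K |K. K \<subseteq> F \<and> (\<forall>S\<in>K. \<forall>T\<in>K. S \<inter> T \<noteq> {})} \<subseteq> card ` Pow F"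
    by auto
  then show "finite {card K |K. K \<subseteq> F \<and> (\<forall>S\<in>K. \<forall>T\<in>K. S \<inter> T \<noteq> {})}"
    using assms(1) finite_subset by blast
qed (use assms in blast)

lemma one_le_clique_number: "finite F \<Longrightarrow> S \<in> F \<Longrightarrow> S \<noteq> {} \<Longrightarrow> 1 \<le> clique_number F"
  using card_le_clique_number[of F "{S}"] by simp

definition arrangement_vertices :: "'a::topological_space set set \<Rightarrow> 'a set" where
  "arrangement_vertices F = {p. \<exists>S\<in>F. \<exists>T\<in>F. S \<noteq> T \<and> p \<in> frontier S \<and> p \<in> frontier T}"

definition crossing_pairs :: "'a::topological_space set set \<Rightarrow> 'a set set set" where
  "crossing_pairs F = {{S, T} | S T. S \<in> F \<and> T \<in> F \<and> S \<noteq> T \<and> frontier S \<inter> frontier T \<noteq> {}}"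

definition nested_pairs :: "'a set set \<Rightarrow> 'a set set set" where
  "nested_pairs F = {{S, T} | S T. S \<in> F \<and> T \<in> F \<and> S \<noteq> T \<and> T \<subseteq> S}"

lemma union_complexity_eq_card_arrangement_vertices:
  "union_complexity F = card (arrangement_vertices F \<inter> frontier (\<Union>F))"
  unfolding union_complexity_def arrangement_vertices_def by (simp add: Int_def)

lemma intersection_edges_subset_crossing_nested_pairs:
  assumes "nice_family F"
  shows "intersection_edges F \<subseteq> crossing_pairs F \<union> nested_pairs F"
proof
  fix e assume "e \<in> intersection_edges F"
  then obtain S T where e: "e = {S, T}" "S \<in> F" "T \<in> F" "S \<noteq> T" "S \<inter> T \<noteq> {}"
    unfolding intersection_edges_def by blast
  show "e \<in> crossing_pairs F \<union> nested_pairs F"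
  proof (cases "frontier S \<inter> frontier T = {}")
    case True
    then have "S \<subseteq> T \<or> T \<subseteq> S"
      using jordan_regions_nested nice_family_jordan_region[OF assms] e(2,3,5) by blast
    moreover have "{S, T} = {T, S}"
      by (rule insert_commute)
    ultimately have "e \<in> nested_pairs F"
      unfolding nested_pairs_def using e by blast
    then show ?thesis
      by blast
  next
    case False
    then show ?thesis
      unfolding crossing_pairs_def using e by blast
  qed
qed

lemma card_nested_pairs_le:
  assumes "finite F" "{} \<notin> F"
  shows "card (nested_pairs F) \<le> (clique_number F - 1) * card F"
proof -
  define above where "above T = {S \<in> F. S \<noteq> T \<and> T \<subseteq> S}" for T
  have "nested_pairs F \<subseteq> (\<Union>T\<in>F. (\<lambda>S. {S, T}) ` above T)"
    unfolding nested_pairs_def above_def by blast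
  then have "card (nested_pairs F) \<le> card (\<Union>T\<in>F. (\<lambda>S. {S, T}) ` above T)"
    using assms(1) by (intro card_mono) (auto simp: above_def)
  also have "\<dots> \<le> (\<Sum>T\<in>F. card ((\<lambda>S. {S, T}) ` above T))"
    by (rule card_UN_le[OF assms(1)])
  also have "\<dots> \<le> (\<Sum>T\<in>F. clique_number F - 1)"
  proof (rule sum_mono)
    fix T assume T: "T \<in> F"
    have fin: "finite (above T)"
      using assms(1) by (simp add: above_def)
    have "T \<subseteq> S" if "S \<in> insert T (above T)" for S
      using that by (auto simp: above_def)
    moreover have "T \<noteq> {}"
      using T assms(2) by auto
    ultimately have "card (insert T (above T)) \<le> clique_number F"
      using T assms(1) by (intro card_le_clique_number) (auto simp: above_def)
    then have "card (above T) \<le> clique_number F - 1"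
      using fin by (simp add: above_def)
    then show "card ((\<lambda>S. {S, T}) ` above T) \<le> clique_number F - 1"
      using card_image_le[OF fin] le_trans by blast
  qed
  finally show ?thesis
    by (simp add: mult.commute)
qed

lemma of_nat_clique_number_minus_1:
  assumes "finite F" "{} \<notin> F"
  shows "real (clique_number F - 1) * real (card F) = (real (clique_number F) - 1) * real (card F)"
proof (cases "F = {}")
  case False
  then have "1 \<le> clique_number F"
    using one_le_clique_number[OF assms(1)] assms(2) by blast
  then show ?thesis
    by (simp add: of_nat_diff)
qed simp

lemma card_intersection_edges_le:
  assumes "finite F" "nice_family F"
  shows "card (intersection_edges F) \<le> card (crossing_pairs F) + card (nested_pairs F)"
proof -
  have "finite (crossing_pairs F)" "finite (nested_pairs F)"
    using assms(1) by (auto intro: finite_subset[of _ "Pow F"] simp: crossing_pairs_def nested_pairs_def)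
  then show ?thesis
    using intersection_edges_subset_crossing_nested_pairs[OF assms(2)]
    by (meson card_Un_le card_mono finite_UnI le_trans)
qed

lemma finite_arrangement_vertices:
  assumes "finite F" "nice_family F"
  shows "finite (arrangement_vertices F)"
proof -
  have "arrangement_vertices F = (\<Union>S\<in>F. \<Union>T\<in>F - {S}. frontier S \<inter> frontier T)"
    unfolding arrangement_vertices_def by blast
  also have "finite \<dots>"
    using assms(1) nice_family_finite_frontier_Int[OF assms(2)]
    by (intro finite_UN_I finite_Diff) auto
  finally show ?thesis .
qed

lemma two_le_card_frontier_Int:
  assumes "nice_family F" "S \<in> F" "T \<in> F" "S \<noteq> T" "frontier S \<inter> frontier T \<noteq> {}"
  shows "2 \<le> card (frontier S \<inter> frontier T)"
proof -
  obtain p where p: "p \<in> frontier S" "p \<in> frontier T"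
    using assms(5) by blast
  obtain q where "q \<noteq> p" "q \<in> frontier S \<inter> frontier T"
    using crossing_not_isolated[OF nice_family_jordan_region[OF assms(1,2)]
        nice_family_crosses[OF assms(1-4) p] p(2)] by blast
  then have "card {p, q} \<le> card (frontier S \<inter> frontier T)"
    using p nice_family_finite_frontier_Int[OF assms(1-4)] by (intro card_mono) auto
  with \<open>q \<noteq> p\<close> show ?thesis
    by simp
qed

lemma crossing_pairsE:
  assumes "e \<in> crossing_pairs F"
  obtains S T where "e = {S, T}" "S \<in> F" "T \<in> F" "S \<noteq> T" "frontier S \<inter> frontier T \<noteq> {}"
  using assms unfolding crossing_pairs_def mem_Collect_eq by metis

lemma crossing_pairs_frontiers_disjoint:
  assumes "nice_family F" "e \<in> crossing_pairs F" "e' \<in> crossing_pairs F" "e \<noteq> e'"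
  shows "\<Inter>(frontier ` e) \<inter> \<Inter>(frontier ` e') = {}"
proof (rule ccontr)
  assume "\<Inter>(frontier ` e) \<inter> \<Inter>(frontier ` e') \<noteq> {}"
  then obtain p where p: "\<forall>U\<in>e. p \<in> frontier U" "\<forall>U\<in>e'. p \<in> frontier U"
    by blast
  obtain S T where e: "e = {S, T}" "S \<in> F" "T \<in> F" "S \<noteq> T"
    using assms(2) by (rule crossing_pairsE)
  obtain S' T' where e': "e' = {S', T'}" "S' \<in> F" "T' \<in> F" "S' \<noteq> T'"
    using assms(3) by (rule crossing_pairsE)
  obtain U where "U \<in> e'" "U \<notin> e"
    using assms(4) e e' by blast
  then show False
    using nice_family_no_triple_point[OF assms(1) e(2,3), of U p] p e e' by auto
qed

lemma card_crossing_pairs_le: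
  assumes "finite F" "nice_family F"
  shows "2 * card (crossing_pairs F) \<le> card (arrangement_vertices F)"
proof -
  let ?X = "\<lambda>e. \<Inter>(frontier ` e)"
  have X: "?X e \<subseteq> arrangement_vertices F" "2 \<le> card (?X e)" if e: "e \<in> crossing_pairs F" for e
  proof -
    obtain S T where ST: "e = {S, T}" "S \<in> F" "T \<in> F" "S \<noteq> T" "frontier S \<inter> frontier T \<noteq> {}"
      using e by (rule crossing_pairsE)
    then have X_eq: "?X e = frontier S \<inter> frontier T"
      by simp
    show "?X e \<subseteq> arrangement_vertices F"
      unfolding X_eq arrangement_vertices_def using ST(2-4) by blast
    show "2 \<le> card (?X e)"
      unfolding X_eq by (rule two_le_card_frontier_Int[OF assms(2) ST(2-5)])
  qed
  have "crossing_pairs F \<subseteq> Pow F"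
    by (auto simp: crossing_pairs_def)
  then have "finite (crossing_pairs F)"
    using assms(1) finite_subset by blast
  have "2 * card (crossing_pairs F) = (\<Sum>e\<in>crossing_pairs F. 2)"
    by simp
  also have "\<dots> \<le> (\<Sum>e\<in>crossing_pairs F. card (?X e))"
    using X(2) by (rule sum_mono)
  also have "\<dots> = card (\<Union>e\<in>crossing_pairs F. ?X e)"
  proof (rule card_UN_disjoint[symmetric])
    show "\<forall>e\<in>crossing_pairs F. finite (?X e)"
      using X(1) finite_arrangement_vertices[OF assms] finite_subset by blast
    show "\<forall>e\<in>crossing_pairs F. \<forall>e'\<in>crossing_pairs F. e \<noteq> e' \<longrightarrow> ?X e \<inter> ?X e' = {}"
      using crossing_pairs_frontiers_disjoint[OF assms(2)] by blast
  qed fact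
  also have "\<dots> \<le> card (arrangement_vertices F)"
    using X(1) finite_arrangement_vertices[OF assms] by (intro card_mono UN_least)
  finally show ?thesis .
qed

lemma nice_family_subset:
  assumes "nice_family F" "R \<subseteq> F"
  shows "nice_family R"
  using assms unfolding nice_family_def by (meson subsetD)

lemma exposed_vertex_in_union_frontier:
  assumes "nice_family F" "finite R" "R \<subseteq> F" "S \<in> R" "T \<in> R" "S \<noteq> T"
    and "p \<in> frontier S" "p \<in> frontier T" "\<And>U. U \<in> R \<Longrightarrow> p \<in> U \<Longrightarrow> U = S \<or> U = T"
  shows "p \<in> arrangement_vertices R \<inter> frontier (\<Union>R)"
proof -
  have "curve_crosses_at (frontier S) (frontier T) p"
    using nice_family_crosses[OF assms(1)] assms(3-8) by blast
  then have "p \<in> frontier (\<Union>R)"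
    using crossing_in_frontier_Union[OF assms(2) _ assms(4,5) _ assms(7,9)]
      nice_family_jordan_region[OF assms(1)] assms(3) by blast
  moreover have "p \<in> arrangement_vertices R"
    unfolding arrangement_vertices_def using assms(4-8) by blast
  ultimately show ?thesis
    by blast
qed

lemma card_arrangement_vertices_sample_bound:
  assumes "finite F" "nice_family F"
    and "\<And>R. R \<subseteq> F \<Longrightarrow> real (union_complexity R) \<le> c * real (card R)"
    and "0 \<le> q" "q \<le> 1"
  shows "real (card (arrangement_vertices F)) * (q ^ 2 * (1 - q) ^ (clique_number F - 2))
           \<le> c * q * real (card F)"
proof -
  let ?V = "arrangement_vertices F"
  have "\<forall>p\<in>?V. \<exists>S T. S \<in> F \<and> T \<in> F \<and> S \<noteq> T \<and> p \<in> frontier S \<and> p \<in> frontier T"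
    unfolding arrangement_vertices_def by blast
  then obtain S T where ST: "\<And>p. p \<in> ?V \<Longrightarrow>
      S p \<in> F \<and> T p \<in> F \<and> S p \<noteq> T p \<and> p \<in> frontier (S p) \<and> p \<in> frontier (T p)"
    by metis
  define A where "A p = {S p, T p}" for p
  define D where "D p = {U \<in> F. p \<in> U} - A p" for p
  have card_D: "card (D p) \<le> clique_number F - 2" if "p \<in> ?V" for p
  proof -
    have "A p \<subseteq> {U \<in> F. p \<in> U}"
      using ST[OF that] frontier_jordan_region_subset nice_family_jordan_region[OF assms(2)]
      by (auto simp: A_def)
    moreover have "finite {U \<in> F. p \<in> U}"
      using assms(1) by simp
    ultimately have "card {U \<in> F. p \<in> U} = card (A p) + card (D p)"
      unfolding D_def by (metis card_Diff_subset card_mono finite_subset le_add_diff_inverse)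
    moreover have "card {U \<in> F. p \<in> U} \<le> clique_number F"
      using assms(1) by (intro card_le_clique_number) auto
    ultimately show ?thesis
      using ST[OF that] by (simp add: A_def)
  qed
  have exposed: "real (card {p \<in> ?V. A p \<subseteq> R \<and> D p \<inter> R = {}}) \<le> c * real (card R)"
    if "R \<subseteq> F" for R
  proof -
    have "finite R"
      using assms(1) that finite_subset by blast
    have "{p \<in> ?V. A p \<subseteq> R \<and> D p \<inter> R = {}} \<subseteq> arrangement_vertices R \<inter> frontier (\<Union>R)"
    proof
      fix p assume "p \<in> {p \<in> ?V. A p \<subseteq> R \<and> D p \<inter> R = {}}"
      then have p: "p \<in> ?V" "A p \<subseteq> R" "D p \<inter> R = {}"
        by auto
      have "U = S p \<or> U = T p" if "U \<in> R" "p \<in> U" for U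
        using p(3) that \<open>R \<subseteq> F\<close> unfolding D_def A_def by blast
      moreover have "S p \<in> R" "T p \<in> R"
        using p(2) by (auto simp: A_def)
      ultimately show "p \<in> arrangement_vertices R \<inter> frontier (\<Union>R)"
        using ST[OF p(1)] exposed_vertex_in_union_frontier[OF assms(2) \<open>finite R\<close> that] by blast
    qed
    moreover have "finite (arrangement_vertices R)"
      using finite_arrangement_vertices[OF \<open>finite R\<close> nice_family_subset[OF assms(2) that]] .
    ultimately have "card {p \<in> ?V. A p \<subseteq> R \<and> D p \<inter> R = {}} \<le> union_complexity R"
      unfolding union_complexity_eq_card_arrangement_vertices by (intro card_mono) auto
    then show ?thesis
      using assms(3)[OF that] by linarith
  qed
  have A: "A p \<subseteq> F" "card (A p) = 2" if "p \<in> ?V" for p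
    using ST[OF that] by (auto simp: A_def)
  have D: "D p \<subseteq> F" "A p \<inter> D p = {}" if "p \<in> ?V" for p
    by (auto simp: D_def)
  show ?thesis
    by (rule clarkson_shor_bound[where A = A and D = D,
          OF assms(1) finite_arrangement_vertices[OF assms(1,2)] assms(4,5) A(1) D A(2) card_D exposed])
qed

lemma arrangement_vertices_empty_if_clique_number_le_1:
  assumes "finite F" "nice_family F" "clique_number F \<le> 1"
  shows "arrangement_vertices F = {}"
proof (rule ccontr)
  assume "arrangement_vertices F \<noteq> {}"
  then obtain p S T where "S \<in> F" "T \<in> F" "S \<noteq> T" "p \<in> frontier S" "p \<in> frontier T"
    unfolding arrangement_vertices_def by blast
  moreover have "p \<in> S \<inter> T"
    using calculation frontier_jordan_region_subset nice_family_jordan_region[OF assms(2)] by blast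
  ultimately have "card {S, T} \<le> clique_number F"
    using assms(1) by (intro card_le_clique_number) auto
  with \<open>S \<noteq> T\<close> assms(3) show False
    by simp
qed

lemma card_arrangement_vertices_le:
  assumes "finite F" "nice_family F"
    and "\<And>R. R \<subseteq> F \<Longrightarrow> real (union_complexity R) \<le> c * real (card R)"
  shows "real (card (arrangement_vertices F))
           \<le> c * exp 1 * real (card F) * real (clique_number F - 1)"
proof (cases "clique_number F \<le> 1")
  case False
  define m where "m = clique_number F - 1"
  have "m \<ge> 1" "clique_number F - 2 = m - 1"
    using False by (auto simp: m_def)
  define q where "q = 1 / real m"
  have q: "0 < q" "q \<le> 1"
    using \<open>m \<ge> 1\<close> by (auto simp: q_def)
  have "real (card (arrangement_vertices F)) * (q ^ 2 * exp (-1))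
          \<le> real (card (arrangement_vertices F)) * (q ^ 2 * (1 - q) ^ (m - 1))"
    using exp_minus_one_le_power[OF \<open>m \<ge> 1\<close>] by (intro mult_left_mono) (auto simp: q_def)
  also have "\<dots> \<le> c * q * real (card F)"
    using card_arrangement_vertices_sample_bound[OF assms, of q] q \<open>clique_number F - 2 = m - 1\<close>
    by simp
  finally have "real (card (arrangement_vertices F)) * q * exp (-1) \<le> c * real (card F)"
    using q by (simp add: power2_eq_square field_simps)
  then show ?thesis
    using \<open>m \<ge> 1\<close> by (simp add: q_def exp_minus field_simps) (simp add: m_def mult_ac)
qed (simp add: arrangement_vertices_empty_if_clique_number_le_1 assms)

theorem theorem1:
  fixes c :: real and F :: "complex set set"
  assumes "c > 0"
    and "finite F"
    and "nice_family F"
    and "\<And>F'. F' \<subseteq> F \<Longrightarrow> real (union_complexity F') \<le> c * real (card F')"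
  shows "real (card (intersection_edges F))
           \<le> ((c * exp 1 / 2 + 1) * real (clique_number F) - 1) * real (card F)"
proof -
  let ?\<omega> = "clique_number F" and ?n = "card F"
  let ?X = "c * exp 1 * real ?n"
  have "{} \<notin> F"
    using jordan_region_nonempty nice_family_jordan_region[OF assms(3)] by blast
  have "card (intersection_edges F) \<le> card (crossing_pairs F) + card (nested_pairs F)"
    by (rule card_intersection_edges_le[OF assms(2,3)])
  moreover have "2 * real (card (crossing_pairs F)) \<le> ?X * real (?\<omega> - 1)"
    using card_crossing_pairs_le[OF assms(2,3)] card_arrangement_vertices_le[OF assms(2-4)]
    by linarith
  moreover have "?X * real (?\<omega> - 1) \<le> ?X * real ?\<omega>"
    using assms(1) by (intro mult_left_mono) auto
  moreover have "real (card (nested_pairs F)) \<le> (real ?\<omega> - 1) * real ?n"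
    using card_nested_pairs_le[OF assms(2) \<open>{} \<notin> F\<close>] of_nat_clique_number_minus_1[OF assms(2)
        \<open>{} \<notin> F\<close>] by (metis of_nat_mono of_nat_mult)
  moreover have "((c * exp 1 / 2 + 1) * real ?\<omega> - 1) * real ?n
      = ?X * real ?\<omega> / 2 + (real ?\<omega> - 1) * real ?n"
    by (simp add: field_simps)
  ultimately show ?thesis
    by linarith
qed

end
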